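(* Let $(X,d)$ be a finite tree-like pseudometric space, and let $(\mathcal S,\alpha)$ be the unique positively weighted system of compatible splits of $X$ with $d=d_\alpha$. Then $$\operatorname{LIP}(X,d)=\sum_{\sigma\in\mathcal S}\alpha_\sigma S_\sigma$$ (Minkowski sum); in particular $\operatorname{LIP}(X,d)$ is a zonotope.
   Context: Let $X$ be a finite set, $n:=|X|$, $\{\mathbbm 1_k\}$ the standard basis of $\mathbb R^X$, $\mathbbm 1_A:=\sum_{x\in A}\mathbbm 1_x$. A split of $X$ is an unordered pair of nonempty disjoint subsets $A,B$ with $A\cup B=X$, written $A|B$. Splits $A|B$ and $C|D$ are compatible if at least one of $A\cap C,A\cap D,B\cap C,B\cap D$ is empty; a system of splits is compatible if its elements are pairwise compatible. For $\sigma=A|B$, $\delta_\sigma(i,j)=0$ if $i,j$ are in the same side, $1$ otherwise; for $\alpha\in\mathbb R_{\ge0}^{\mathcal S}$, $d_\alpha:=\sum_{\sigma\in\mathcal S}\alpha_\sigma\delta_\sigma$; the weighting is positive if all $\alpha_\sigma>0$. $S_\sigma:=\operatorname{conv}\{\tfrac{|B|}{n}\mathbbm 1_A-\tfrac{|A|}{n}\mathbbm 1_B,\ \tfrac{|A|}{n}\mathbbm 1_B-\tfrac{|B|}{n}\mathbbm 1_A\}$. For a pseudometric $d$, $\operatorname{LIP}(X,d):=\{x\in\mathbb R^X\mid\sum_i x_i=0,\ x_i-x_j\le d(i,j)\ \forall i,j\}$. An $X$-tree is a pair $(T,\phi)$ with $T$ a finite tree and $\phi:X\to V(T)$ a map whose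 image contains every vertex of degree at most $2$. A pseudometric $d$ on $X$ is tree-like if there are an $X$-tree $(T,\phi)$ and edge weights $w:E(T)\to\mathbb R_{>0}$ such that $d(x,y)$ equals the total weight of the unique path in $T$ from $\phi(x)$ to $\phi(y)$. It is known (and may be used) that a pseudometric is tree-like if and only if it equals $d_\alpha$ for a positively weighted compatible split system $(\mathcal S,\alpha)$, and that this system is unique; its splits correspond bijectively to edges of $T$ (the split of an edge $e$ separates the preimages under $\phi$ of the two components of $T-e$). *)

theory Defs
  imports "HOL-Analysis.Analysis"
begin

text \<open>Vectors in R^X are functions 'a => real vanishing outside X.
  A split of X is an unordered pair {A, B} (a 2-element set of sets).\<close>

definition is_split :: "'a set \<Rightarrow> 'a set set \<Rightarrow> bool" where
  "is_split X \<sigma> \<longleftrightarrow> (\<exists>A B. \<sigma> = {A, B} \<and> A \<noteq> {} \<and> B \<noteq> {} \<and> A \<inter> B = {} \<and> A \<union> B = X)"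

definition splits_compatible :: "'a set set \<Rightarrow> 'a set set \<Rightarrow> bool" where
  "splits_compatible \<sigma> \<tau> \<longleftrightarrow> (\<exists>A\<in>\<sigma>. \<exists>C\<in>\<tau>. A \<inter> C = {})"

definition compatible_system :: "'a set set set \<Rightarrow> bool" where
  "compatible_system S \<longleftrightarrow> (\<forall>\<sigma>\<in>S. \<forall>\<tau>\<in>S. splits_compatible \<sigma> \<tau>)"

definition split_delta :: "'a set set \<Rightarrow> 'a \<Rightarrow> 'a \<Rightarrow> real" where
  "split_delta \<sigma> i j = (if \<exists>A\<in>\<sigma>. i \<in> A \<and> j \<in> A then 0 else 1)"

definition d_alpha :: "'a set set set \<Rightarrow> ('a set set \<Rightarrow> real) \<Rightarrow> 'a \<Rightarrow> 'a \<Rightarrow> real" where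
  "d_alpha S \<alpha> i j = (\<Sum>\<sigma>\<in>S. \<alpha> \<sigma> * split_delta \<sigma> i j)"

definition vecs :: "'a set \<Rightarrow> ('a \<Rightarrow> real) set" where
  "vecs X = {x. \<forall>i. i \<notin> X \<longrightarrow> x i = 0}"

definition indic :: "'a set \<Rightarrow> 'a \<Rightarrow> real" where
  "indic A = (\<lambda>i. if i \<in> A then 1 else 0)"

definition LIP :: "'a set \<Rightarrow> ('a \<Rightarrow> 'a \<Rightarrow> real) \<Rightarrow> ('a \<Rightarrow> real) set" where
  "LIP X d = {x \<in> vecs X. (\<Sum>i\<in>X. x i) = 0 \<and> (\<forall>i\<in>X. \<forall>j\<in>X. x i - x j \<le> d i j)}"

definition split_vec :: "'a set \<Rightarrow> 'a set set \<Rightarrow> 'a \<Rightarrow> real" where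
  "split_vec X \<sigma> = (let A = (SOME A. A \<in> \<sigma>); B = X - A; n = real (card X) in
     (\<lambda>i. (real (card B) / n) * indic A i - (real (card A) / n) * indic B i))"

definition split_seg :: "'a set \<Rightarrow> 'a set set \<Rightarrow> ('a \<Rightarrow> real) set" where
  "split_seg X \<sigma> = {(\<lambda>i. (1 - u) * split_vec X \<sigma> i + u * (- split_vec X \<sigma> i)) | u. 0 \<le> u \<and> u \<le> 1}"

definition scale_set :: "real \<Rightarrow> ('a \<Rightarrow> real) set \<Rightarrow> ('a \<Rightarrow> real) set" where
  "scale_set c P = {(\<lambda>i. c * y i) | y. y \<in> P}"

definition minkowski_sum :: "'b set \<Rightarrow> ('b \<Rightarrow> ('a \<Rightarrow> real) set) \<Rightarrow> ('a \<Rightarrow> real) set" where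
  "minkowski_sum I P = {(\<lambda>i. \<Sum>k\<in>I. f k i) | f. \<forall>k\<in>I. f k \<in> P k}"

end

theory Submission
  imports Defs
begin

(* Fix a root r in X and orient every split by its side avoiding r. By compatibility, the sides
   containing a point i form a chain, and identifying i with the set of splits separating it from r
   turns d into the alpha-weighted symmetric-difference metric on sets of splits. A point x of
   LIP(X, d) extends (McShane) to a 1-Lipschitz function F on all sets of splits. Telescoping F
   along the chain of splits separating i from r gives x i = F {} + (sum of s_sigma over these
   splits), where s_sigma is the change of F when sigma is removed from the set of splits whose
   side contains that of sigma; one removal moves F by at most alpha_sigma. Since x sums to zero,
   centring gives x = sum s_sigma e_sigma with e_sigma an endpoint of S_sigma. Conversely every
   such sum is in LIP(X, d), split by split. *)

definition centred_indic :: "'a set \<Rightarrow> 'a set \<Rightarrow> 'a \<Rightarrow> real" where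
  "centred_indic X A = (\<lambda>i. indic A i - real (card A) / real (card X) * indic X i)"

lemma split_eq_complement:
  assumes "is_split X \<sigma>" "A \<in> \<sigma>"
  shows "\<sigma> = {A, X - A}" "A \<subseteq> X"
  using assms unfolding is_split_def by auto

lemma split_delta_eq:
  assumes "is_split X \<sigma>" "A \<in> \<sigma>" "i \<in> X" "j \<in> X"
  shows "split_delta \<sigma> i j = (if (i \<in> A) = (j \<in> A) then 0 else 1)"
  using split_eq_complement[OF assms(1,2)] assms(3,4) unfolding split_delta_def by auto

lemma centred_indic_complement:
  assumes "finite X" "A \<subseteq> X"
  shows "centred_indic X (X - A) = (\<lambda>i. - centred_indic X A i)"
proof (cases "X = {}")
  case False
  have "real (card (X - A)) = real (card X) - real (card A)"
    using assms by (simp add: card_Diff_subset finite_subset card_mono of_nat_diff)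
  moreover have "card X > 0" using assms(1) False by (simp add: card_gt_0_iff)
  ultimately show ?thesis
    using assms(2) by (auto simp: fun_eq_iff centred_indic_def indic_def diff_divide_distrib)
qed (use assms in \<open>auto simp: fun_eq_iff centred_indic_def indic_def\<close>)

lemma split_vec_eq_centred_indic:
  assumes "finite X" "is_split X \<sigma>"
  shows "split_vec X \<sigma> = centred_indic X (SOME A. A \<in> \<sigma>)"
proof -
  define A where "A = (SOME A. A \<in> \<sigma>)"
  have "A \<in> \<sigma>" unfolding A_def using assms(2) unfolding is_split_def by (metis insertI1 someI)
  then have AX: "A \<subseteq> X" using split_eq_complement assms(2) by blast
  then have "real (card (X - A)) = real (card X) - real (card A)"
    using assms by (simp add: card_Diff_subset finite_subset card_mono of_nat_diff)
  moreover have "card X > 0" using assms(1) AX \<open>A \<in> \<sigma>\<close> assms(2) unfolding is_split_def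
    by (auto simp: card_gt_0_iff)
  ultimately show ?thesis
    using AX by (auto simp: fun_eq_iff split_vec_def centred_indic_def indic_def
        A_def[symmetric] Let_def diff_divide_distrib)
qed

definition sym_segment :: "real \<Rightarrow> ('a \<Rightarrow> real) \<Rightarrow> ('a \<Rightarrow> real) set" where
  "sym_segment a v = {(\<lambda>i. t * v i) | t. \<bar>t\<bar> \<le> a}"

lemma sym_segment_uminus: "sym_segment a (\<lambda>i. - v i) = sym_segment a v"
proof (intro set_eqI iffI)
  fix y assume "y \<in> sym_segment a (\<lambda>i. - v i)"
  then obtain t where "\<bar>t\<bar> \<le> a" "y = (\<lambda>i. t * - v i)" unfolding sym_segment_def by blast
  then show "y \<in> sym_segment a v" unfolding sym_segment_def by (intro CollectI exI[of _ "- t"]) simp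
next
  fix y assume "y \<in> sym_segment a v"
  then obtain t where "\<bar>t\<bar> \<le> a" "y = (\<lambda>i. t * v i)" unfolding sym_segment_def by blast
  then show "y \<in> sym_segment a (\<lambda>i. - v i)"
    unfolding sym_segment_def by (intro CollectI exI[of _ "- t"]) simp
qed

lemma scale_split_seg_eq:
  assumes "0 \<le> a"
  shows "scale_set a (split_seg X \<sigma>) = sym_segment a (split_vec X \<sigma>)"
proof -
  let ?v = "split_vec X \<sigma>"
  have "scale_set a (split_seg X \<sigma>)
      = {(\<lambda>i. a * ((1 - u) * ?v i + u * - ?v i)) | u. 0 \<le> u \<and> u \<le> 1}"
    unfolding scale_set_def split_seg_def setcompr_eq_image by (simp add: image_image)
  also have "\<dots> = {(\<lambda>i. a * (1 - 2 * u) * ?v i) | u. 0 \<le> u \<and> u \<le> 1}"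
    by (simp add: algebra_simps)
  also have "\<dots> = sym_segment a ?v"
    unfolding sym_segment_def
  proof (intro set_eqI iffI)
    fix y assume "y \<in> {(\<lambda>i. t * ?v i) | t. \<bar>t\<bar> \<le> a}"
    then obtain t where t: "\<bar>t\<bar> \<le> a" "y = (\<lambda>i. t * ?v i)" by blast
    have "- 1 \<le> t / a \<and> t / a \<le> 1" "a * (1 - 2 * ((1 - t / a) / 2)) = t"
      using t(1) assms by (cases "a = 0"; auto simp: field_simps)+
    then show "y \<in> {(\<lambda>i. a * (1 - 2 * u) * ?v i) | u. 0 \<le> u \<and> u \<le> 1}"
      using t(2) by (intro CollectI exI[of _ "(1 - t / a) / 2"]) auto
  next
    fix y assume "y \<in> {(\<lambda>i. a * (1 - 2 * u) * ?v i) | u. 0 \<le> u \<and> u \<le> 1}"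
    then obtain u where u: "0 \<le> u" "u \<le> 1" "y = (\<lambda>i. a * (1 - 2 * u) * ?v i)" by blast
    have "\<bar>1 - 2 * u\<bar> \<le> 1" using u(1,2) by linarith
    then have "\<bar>a * (1 - 2 * u)\<bar> \<le> a" using assms by (simp add: abs_mult mult_left_le)
    then show "y \<in> {(\<lambda>i. t * ?v i) | t. \<bar>t\<bar> \<le> a}"
      using u(3) by (intro CollectI exI[of _ "a * (1 - 2 * u)"]) simp
  qed
  finally show ?thesis .
qed

lemma scale_split_seg_eq_centred:
  assumes "finite X" "is_split X \<sigma>" "A \<in> \<sigma>" "0 \<le> a"
  shows "scale_set a (split_seg X \<sigma>) = sym_segment a (centred_indic X A)"
proof -
  have AX: "A \<subseteq> X" using split_eq_complement[OF assms(2,3)] by blast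
  have "(SOME A. A \<in> \<sigma>) \<in> \<sigma>" using assms(3) by (rule someI)
  then consider "(SOME A. A \<in> \<sigma>) = A" | "(SOME A. A \<in> \<sigma>) = X - A"
    using split_eq_complement[OF assms(2,3)] by blast
  then show ?thesis
    by cases (simp_all only: scale_split_seg_eq[OF assms(4)]
        split_vec_eq_centred_indic[OF assms(1,2)] centred_indic_complement[OF assms(1) AX]
        sym_segment_uminus)
qed

lemma minkowski_sum_cong:
  "(\<And>k. k \<in> I \<Longrightarrow> P k = Q k) \<Longrightarrow> minkowski_sum I P = minkowski_sum I Q"
  by (simp add: minkowski_sum_def)

definition zonotope :: "'b set \<Rightarrow> ('b \<Rightarrow> real) \<Rightarrow> ('b \<Rightarrow> 'a \<Rightarrow> real) \<Rightarrow> ('a \<Rightarrow> real) set" where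
  "zonotope I a v = {(\<lambda>i. \<Sum>k\<in>I. s k * v k i) | s. \<forall>k\<in>I. \<bar>s k\<bar> \<le> a k}"

lemma minkowski_sum_sym_segments:
  "minkowski_sum I (\<lambda>k. sym_segment (a k) (v k)) = zonotope I a v"
proof (intro set_eqI iffI)
  fix x assume "x \<in> minkowski_sum I (\<lambda>k. sym_segment (a k) (v k))"
  then obtain f where x: "x = (\<lambda>i. \<Sum>k\<in>I. f k i)"
    and f: "\<forall>k\<in>I. \<exists>t. f k = (\<lambda>i. t * v k i) \<and> \<bar>t\<bar> \<le> a k"
    unfolding minkowski_sum_def sym_segment_def by blast
  then obtain s where "\<forall>k\<in>I. f k = (\<lambda>i. s k * v k i) \<and> \<bar>s k\<bar> \<le> a k"
    using bchoice[OF f] by blast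
  then show "x \<in> zonotope I a v"
    unfolding zonotope_def x by (intro CollectI exI[of _ s]) auto
next
  fix x assume "x \<in> zonotope I a v"
  then obtain s where "x = (\<lambda>i. \<Sum>k\<in>I. s k * v k i)" "\<forall>k\<in>I. \<bar>s k\<bar> \<le> a k"
    unfolding zonotope_def by blast
  then show "x \<in> minkowski_sum I (\<lambda>k. sym_segment (a k) (v k))"
    unfolding minkowski_sum_def sym_segment_def
    by (intro CollectI exI[of _ "\<lambda>k i. s k * v k i"]) auto
qed

lemma sum_indic: "finite X \<Longrightarrow> A \<subseteq> X \<Longrightarrow> (\<Sum>i\<in>X. indic A i) = real (card A)"
  by (simp add: indic_def sum.If_cases Int_absorb1)

lemma sum_centred_indic:
  assumes "finite X" "A \<subseteq> X"
  shows "(\<Sum>i\<in>X. centred_indic X A i) = 0"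
proof (cases "X = {}")
  case False
  have "(\<Sum>i\<in>X. centred_indic X A i)
      = (\<Sum>i\<in>X. indic A i) - real (card A) / real (card X) * (\<Sum>i\<in>X. indic X i)"
    by (simp add: centred_indic_def sum_subtractf sum_distrib_left)
  also have "\<dots> = real (card A) - real (card A) / real (card X) * real (card X)"
    using assms by (simp add: sum_indic)
  also have "\<dots> = 0" using assms(1) False by simp
  finally show ?thesis .
qed simp

lemma centred_indic_diff:
  "i \<in> X \<Longrightarrow> j \<in> X \<Longrightarrow> centred_indic X A i - centred_indic X A j = indic A i - indic A j"
  by (simp add: centred_indic_def indic_def)

lemma centred_indic_outside: "A \<subseteq> X \<Longrightarrow> i \<notin> X \<Longrightarrow> centred_indic X A i = 0"
  by (auto simp: centred_indic_def indic_def)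

lemma zonotope_subset_LIP:
  assumes "finite X" "\<forall>\<sigma>\<in>S. is_split X \<sigma>" "\<forall>\<sigma>\<in>S. A \<sigma> \<in> \<sigma>"
  shows "zonotope S \<alpha> (\<lambda>\<sigma>. centred_indic X (A \<sigma>)) \<subseteq> LIP X (d_alpha S \<alpha>)"
proof
  fix x assume "x \<in> zonotope S \<alpha> (\<lambda>\<sigma>. centred_indic X (A \<sigma>))"
  then obtain s where x: "x = (\<lambda>i. \<Sum>\<sigma>\<in>S. s \<sigma> * centred_indic X (A \<sigma>) i)"
    and s: "\<forall>\<sigma>\<in>S. \<bar>s \<sigma>\<bar> \<le> \<alpha> \<sigma>"
    unfolding zonotope_def by blast
  have AX: "\<forall>\<sigma>\<in>S. A \<sigma> \<subseteq> X" using assms(2,3) split_eq_complement(2) by metis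
  have "x \<in> vecs X" using AX by (simp add: vecs_def x centred_indic_outside)
  moreover have "(\<Sum>i\<in>X. x i) = 0"
  proof -
    have "(\<Sum>i\<in>X. x i) = (\<Sum>\<sigma>\<in>S. s \<sigma> * (\<Sum>i\<in>X. centred_indic X (A \<sigma>) i))"
      unfolding x by (subst sum.swap) (simp add: sum_distrib_left)
    also have "\<dots> = 0" using AX assms(1) by (simp add: sum_centred_indic)
    finally show ?thesis .
  qed
  moreover have "x i - x j \<le> d_alpha S \<alpha> i j" if "i \<in> X" "j \<in> X" for i j
  proof -
    have "x i - x j = (\<Sum>\<sigma>\<in>S. s \<sigma> * (centred_indic X (A \<sigma>) i - centred_indic X (A \<sigma>) j))"
      by (simp add: x sum_subtractf[symmetric] right_diff_distrib)
    also have "\<dots> = (\<Sum>\<sigma>\<in>S. s \<sigma> * (indic (A \<sigma>) i - indic (A \<sigma>) j))"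
      using that by (simp only: centred_indic_diff)
    also have "\<dots> \<le> (\<Sum>\<sigma>\<in>S. \<alpha> \<sigma> * split_delta \<sigma> i j)"
    proof (rule sum_mono)
      fix \<sigma> assume "\<sigma> \<in> S"
      then have "split_delta \<sigma> i j = (if (i \<in> A \<sigma>) = (j \<in> A \<sigma>) then 0 else 1)"
        using assms(2,3) that by (intro split_delta_eq) auto
      then show "s \<sigma> * (indic (A \<sigma>) i - indic (A \<sigma>) j) \<le> \<alpha> \<sigma> * split_delta \<sigma> i j"
        using s \<open>\<sigma> \<in> S\<close> by (auto simp: indic_def abs_le_iff)
    qed
    finally show ?thesis unfolding d_alpha_def .
  qed
  ultimately show "x \<in> LIP X (d_alpha S \<alpha>)" unfolding LIP_def by blast
qed

lemma centred_decomposition: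
  assumes "finite X" "finite S" "x \<in> vecs X" "(\<Sum>i\<in>X. x i) = 0" "\<forall>\<sigma>\<in>S. A \<sigma> \<subseteq> X"
    and x: "\<forall>i\<in>X. x i = K + (\<Sum>\<sigma>\<in>S. s \<sigma> * indic (A \<sigma>) i)"
  shows "x = (\<lambda>i. \<Sum>\<sigma>\<in>S. s \<sigma> * centred_indic X (A \<sigma>) i)"
proof
  fix i
  define n where "n = real (card X)"
  show "x i = (\<Sum>\<sigma>\<in>S. s \<sigma> * centred_indic X (A \<sigma>) i)"
  proof (cases "i \<in> X")
    case True
    then have "n > 0" unfolding n_def using assms(1) card_gt_0_iff by fastforce
    have "0 = (\<Sum>j\<in>X. K + (\<Sum>\<sigma>\<in>S. s \<sigma> * indic (A \<sigma>) j))" using assms(4) x by simp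
    also have "\<dots> = n * K + (\<Sum>\<sigma>\<in>S. s \<sigma> * (\<Sum>j\<in>X. indic (A \<sigma>) j))"
      unfolding sum.distrib by (subst sum.swap) (simp add: n_def sum_distrib_left)
    also have "\<dots> = n * K + (\<Sum>\<sigma>\<in>S. s \<sigma> * real (card (A \<sigma>)))"
      using assms(1,5) by (simp add: sum_indic)
    finally have "K = - (\<Sum>\<sigma>\<in>S. s \<sigma> * real (card (A \<sigma>))) / n"
      using \<open>n > 0\<close> by (simp add: field_simps)
    then show ?thesis
      using x True \<open>n > 0\<close>
      by (simp add: centred_indic_def indic_def n_def right_diff_distrib sum_subtractf
        sum_divide_distrib)
  next
    case False
    then show ?thesis using assms(3,5) by (simp add: vecs_def centred_indic_outside)
  qed
qed

definition weighted_sym_diff :: "'b set \<Rightarrow> ('b \<Rightarrow> real) \<Rightarrow> 'b set \<Rightarrow> 'b set \<Rightarrow> real" where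
  "weighted_sym_diff S \<alpha> U V = sum \<alpha> {\<sigma>\<in>S. (\<sigma> \<in> U) \<noteq> (\<sigma> \<in> V)}"

lemma weighted_sym_diff_self: "weighted_sym_diff S \<alpha> U U = 0"
  by (simp add: weighted_sym_diff_def)

lemma weighted_sym_diff_commute: "weighted_sym_diff S \<alpha> U V = weighted_sym_diff S \<alpha> V U"
  unfolding weighted_sym_diff_def by meson

lemma weighted_sym_diff_triangle:
  assumes "finite S" "\<forall>\<sigma>\<in>S. 0 \<le> \<alpha> \<sigma>"
  shows "weighted_sym_diff S \<alpha> U W \<le> weighted_sym_diff S \<alpha> U V + weighted_sym_diff S \<alpha> V W"
proof -
  have "weighted_sym_diff S \<alpha> U W = (\<Sum>\<sigma>\<in>S. if (\<sigma> \<in> U) \<noteq> (\<sigma> \<in> W) then \<alpha> \<sigma> else 0)"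
    unfolding weighted_sym_diff_def using assms(1) by (rule sum.inter_filter)
  also have "\<dots> \<le> (\<Sum>\<sigma>\<in>S. (if (\<sigma> \<in> U) \<noteq> (\<sigma> \<in> V) then \<alpha> \<sigma> else 0)
                       + (if (\<sigma> \<in> V) \<noteq> (\<sigma> \<in> W) then \<alpha> \<sigma> else 0))"
    using assms(2) by (intro sum_mono) auto
  also have "\<dots> = weighted_sym_diff S \<alpha> U V + weighted_sym_diff S \<alpha> V W"
    unfolding weighted_sym_diff_def sum.distrib using assms(1) by (simp add: sum.inter_filter)
  finally show ?thesis .
qed

lemma weighted_sym_diff_remove:
  assumes "\<sigma> \<in> S" "\<sigma> \<in> U"
  shows "weighted_sym_diff S \<alpha> U (U - {\<sigma>}) = \<alpha> \<sigma>"
proof -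
  have "{\<tau>\<in>S. (\<tau> \<in> U) \<noteq> (\<tau> \<in> U - {\<sigma>})} = {\<sigma>}" using assms by auto
  then show ?thesis by (simp add: weighted_sym_diff_def)
qed

lemma mcshane_extension:
  fixes \<rho> :: "'b \<Rightarrow> 'b \<Rightarrow> real" and p :: "'a \<Rightarrow> 'b" and x :: "'a \<Rightarrow> real"
  assumes "finite X" "X \<noteq> {}"
    and triangle: "\<And>u v w. \<rho> u w \<le> \<rho> u v + \<rho> v w" and refl: "\<And>u. \<rho> u u = 0"
    and lip: "\<And>i j. i \<in> X \<Longrightarrow> j \<in> X \<Longrightarrow> x i - x j \<le> \<rho> (p i) (p j)"
  obtains F where "\<And>i. i \<in> X \<Longrightarrow> F (p i) = x i" "\<And>u v. F u - F v \<le> \<rho> u v"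
proof
  define F where "F u = Max ((\<lambda>j. x j - \<rho> (p j) u) ` X)" for u
  have F_ge: "x j - \<rho> (p j) u \<le> F u" if "j \<in> X" for j u
    unfolding F_def using assms(1) that by simp
  have F_attained: "\<exists>j\<in>X. F u = x j - \<rho> (p j) u" for u
  proof -
    have "F u \<in> (\<lambda>j. x j - \<rho> (p j) u) ` X" unfolding F_def using assms(1,2) by (intro Max_in) auto
    then show ?thesis by blast
  qed
  show "F (p i) = x i" if "i \<in> X" for i
  proof -
    obtain j where "j \<in> X" "F (p i) = x j - \<rho> (p j) (p i)" using F_attained by blast
    then show ?thesis using F_ge[OF that, of "p i"] lip[of j i] that refl by force
  qed
  show "F u - F v \<le> \<rho> u v" for u v
  proof -
    obtain j where "j \<in> X" "F u = x j - \<rho> (p j) u" using F_attained by blast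
    moreover have "\<rho> (p j) v \<le> \<rho> (p j) u + \<rho> u v" by (rule triangle)
    ultimately show ?thesis using F_ge[of j v] by force
  qed
qed

lemma sum_telescope_chain:
  fixes g :: "'b set \<Rightarrow> 'c::ab_group_add" and h :: "'b \<Rightarrow> 'd::order"
  assumes "finite U" "inj_on h U" "\<And>\<sigma> \<tau>. \<sigma> \<in> U \<Longrightarrow> \<tau> \<in> U \<Longrightarrow> h \<sigma> \<le> h \<tau> \<or> h \<tau> \<le> h \<sigma>"
  shows "(\<Sum>\<sigma>\<in>U. g {\<tau>\<in>U. h \<sigma> \<le> h \<tau>} - g {\<tau>\<in>U. h \<sigma> < h \<tau>}) = g U - g {}"
  using assms(1)
proof (induction U rule: finite_remove_induct)
  case empty
  then show ?case by simp
next
  case (remove A)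
  obtain m where "m \<in> A" and m_min: "\<forall>\<tau>\<in>A. h \<tau> \<le> h m \<longrightarrow> \<tau> = m"
    using finite_has_minimal[of "h ` A"] remove.hyps(1,2) inj_on_subset[OF assms(2) remove.hyps(3)]
    by (auto simp: inj_on_eq_iff)
  have m_least: "h m \<le> h \<tau>" if "\<tau> \<in> A" for \<tau>
    using that m_min assms(3) remove.hyps(3) \<open>m \<in> A\<close> by blast
  have upper_m: "{\<tau>\<in>A. h m \<le> h \<tau>} = A" "{\<tau>\<in>A. h m < h \<tau>} = A - {m}"
    using m_least m_min by (auto simp: less_le)
  have upper_other: "{\<tau>\<in>A. h \<sigma> \<le> h \<tau>} = {\<tau>\<in>A - {m}. h \<sigma> \<le> h \<tau>}"
    "{\<tau>\<in>A. h \<sigma> < h \<tau>} = {\<tau>\<in>A - {m}. h \<sigma> < h \<tau>}" if "\<sigma> \<in> A - {m}" for \<sigma>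
    using that m_least m_min by (auto simp: less_le antisym)
  have "(\<Sum>\<sigma>\<in>A. g {\<tau>\<in>A. h \<sigma> \<le> h \<tau>} - g {\<tau>\<in>A. h \<sigma> < h \<tau>})
      = (g {\<tau>\<in>A. h m \<le> h \<tau>} - g {\<tau>\<in>A. h m < h \<tau>})
        + (\<Sum>\<sigma>\<in>A - {m}. g {\<tau>\<in>A. h \<sigma> \<le> h \<tau>} - g {\<tau>\<in>A. h \<sigma> < h \<tau>})"
    using remove.hyps(1) \<open>m \<in> A\<close> by (rule sum.remove)
  also have "\<dots> = (g A - g (A - {m}))
        + (\<Sum>\<sigma>\<in>A - {m}. g {\<tau>\<in>A - {m}. h \<sigma> \<le> h \<tau>} - g {\<tau>\<in>A - {m}. h \<sigma> < h \<tau>})"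
    unfolding upper_m
    by (intro arg_cong2[where f = "(+)"] refl sum.cong) (simp_all only: upper_other)
  also have "\<dots> = g A - g {}" using remove.IH[OF \<open>m \<in> A\<close>] by simp
  finally show ?case .
qed

locale rooted_split_system =
  fixes X :: "'a set" and S :: "'a set set set" and r :: 'a
  assumes finite_X: "finite X"
    and splits: "\<forall>\<sigma>\<in>S. is_split X \<sigma>"
    and compatible: "compatible_system S"
    and root_in: "r \<in> X"
begin

definition side :: "'a set set \<Rightarrow> 'a set" where
  "side \<sigma> = (SOME A. A \<in> \<sigma> \<and> r \<notin> A)"

lemma side:
  assumes "\<sigma> \<in> S"
  shows "side \<sigma> \<in> \<sigma>" "r \<notin> side \<sigma>" "side \<sigma> \<subseteq> X" "\<sigma> = {side \<sigma>, X - side \<sigma>}"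
proof -
  have split: "is_split X \<sigma>" using splits assms by blast
  then obtain A B where "\<sigma> = {A, B}" "A \<inter> B = {}" "A \<union> B = X" unfolding is_split_def by blast
  then have "\<exists>A. A \<in> \<sigma> \<and> r \<notin> A" using root_in by blast
  then have side: "side \<sigma> \<in> \<sigma> \<and> r \<notin> side \<sigma>" unfolding side_def by (rule someI_ex)
  then show "side \<sigma> \<in> \<sigma>" "r \<notin> side \<sigma>" by simp_all
  show "side \<sigma> \<subseteq> X" "\<sigma> = {side \<sigma>, X - side \<sigma>}"
    using split_eq_complement[OF split] side by simp_all
qed

lemma finite_S: "finite S"
proof -
  have "S \<subseteq> Pow (Pow X)"
  proof
    fix \<sigma> assume "\<sigma> \<in> S"
    then show "\<sigma> \<in> Pow (Pow X)" using side(3,4)[of \<sigma>] by auto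
  qed
  then show ?thesis using finite_X by (meson finite_Pow_iff finite_subset)
qed

lemma inj_on_side: "inj_on side S"
  by (rule inj_onI) (metis side(4))

lemma sides_nested:
  assumes "\<sigma> \<in> S" "\<tau> \<in> S" "i \<in> side \<sigma>" "i \<in> side \<tau>"
  shows "side \<sigma> \<subseteq> side \<tau> \<or> side \<tau> \<subseteq> side \<sigma>"
proof -
  obtain A C where AC: "A \<in> \<sigma>" "C \<in> \<tau>" "A \<inter> C = {}"
    using compatible assms(1,2) unfolding compatible_system_def splits_compatible_def by blast
  have "A = side \<sigma> \<or> A = X - side \<sigma>" "C = side \<tau> \<or> C = X - side \<tau>"
    using AC(1,2) side(4)[OF assms(1)] side(4)[OF assms(2)] by auto
  then show ?thesis
    using AC(3) assms(3,4) root_in side(2,3)[OF assms(1)] side(2,3)[OF assms(2)] by blast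
qed

definition separating :: "'a \<Rightarrow> 'a set set set" where
  "separating i = {\<sigma>\<in>S. i \<in> side \<sigma>}"

lemma d_alpha_eq_weighted_sym_diff:
  assumes "i \<in> X" "j \<in> X"
  shows "d_alpha S \<alpha> i j = weighted_sym_diff S \<alpha> (separating i) (separating j)"
proof -
  have "d_alpha S \<alpha> i j = (\<Sum>\<sigma>\<in>S. if (\<sigma> \<in> separating i) \<noteq> (\<sigma> \<in> separating j) then \<alpha> \<sigma> else 0)"
    unfolding d_alpha_def separating_def
  proof (rule sum.cong)
    fix \<sigma> assume "\<sigma> \<in> S"
    then have "split_delta \<sigma> i j = (if (i \<in> side \<sigma>) = (j \<in> side \<sigma>) then 0 else 1)"
      using assms splits side(1) by (intro split_delta_eq) auto
    then show "\<alpha> \<sigma> * split_delta \<sigma> i j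
        = (if (\<sigma> \<in> {\<sigma>\<in>S. i \<in> side \<sigma>}) \<noteq> (\<sigma> \<in> {\<sigma>\<in>S. j \<in> side \<sigma>}) then \<alpha> \<sigma> else 0)"
      using \<open>\<sigma> \<in> S\<close> by simp
  qed simp
  then show ?thesis
    unfolding weighted_sym_diff_def using finite_S by (simp add: sum.inter_filter)
qed

definition upper :: "'a set set \<Rightarrow> 'a set set set" where
  "upper \<sigma> = {\<tau>\<in>S. side \<sigma> \<subseteq> side \<tau>}"

lemma sum_separating_telescope:
  "(\<Sum>\<sigma>\<in>S. (F (upper \<sigma>) - F (upper \<sigma> - {\<sigma>})) * indic (side \<sigma>) i)
     = F (separating i) - F {}"
proof -
  have upper_separating:
    "upper \<sigma> = {\<tau>\<in>separating i. side \<sigma> \<subseteq> side \<tau>}"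
    "{\<tau>\<in>separating i. side \<sigma> \<subseteq> side \<tau>} - {\<sigma>} = {\<tau>\<in>separating i. side \<sigma> \<subset> side \<tau>}"
    if "\<sigma> \<in> separating i" for \<sigma>
    using that inj_on_side by (auto simp: upper_def separating_def inj_on_eq_iff)
  have "(\<Sum>\<sigma>\<in>S. (F (upper \<sigma>) - F (upper \<sigma> - {\<sigma>})) * indic (side \<sigma>) i)
      = (\<Sum>\<sigma>\<in>separating i. F (upper \<sigma>) - F (upper \<sigma> - {\<sigma>}))"
    unfolding separating_def sum.inter_filter[OF finite_S]
    by (rule sum.cong) (simp_all add: indic_def)
  also have "\<dots> = (\<Sum>\<sigma>\<in>separating i. F {\<tau>\<in>separating i. side \<sigma> \<subseteq> side \<tau>}
                                   - F {\<tau>\<in>separating i. side \<sigma> \<subset> side \<tau>})"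
    by (rule sum.cong) (simp_all only: upper_separating)
  also have "\<dots> = F (separating i) - F {}"
  proof (rule sum_telescope_chain)
    show "finite (separating i)" using finite_S by (simp add: separating_def)
    show "inj_on side (separating i)"
      using inj_on_side by (rule inj_on_subset) (auto simp: separating_def)
  qed (auto simp: separating_def dest: sides_nested)
  finally show ?thesis .
qed

lemma LIP_affine_decomposition:
  assumes "\<forall>\<sigma>\<in>S. 0 \<le> \<alpha> \<sigma>" "x \<in> LIP X (d_alpha S \<alpha>)"
  obtains K s where "\<forall>\<sigma>\<in>S. \<bar>s \<sigma>\<bar> \<le> \<alpha> \<sigma>"
    "\<forall>i\<in>X. x i = K + (\<Sum>\<sigma>\<in>S. s \<sigma> * indic (side \<sigma>) i)"
proof -
  let ?\<rho> = "weighted_sym_diff S \<alpha>"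
  have lip: "x i - x j \<le> ?\<rho> (separating i) (separating j)" if "i \<in> X" "j \<in> X" for i j
  proof -
    have "x i - x j \<le> d_alpha S \<alpha> i j" using assms(2) that unfolding LIP_def by blast
    then show ?thesis using d_alpha_eq_weighted_sym_diff[OF that, of \<alpha>] by simp
  qed
  have triangle: "?\<rho> U W \<le> ?\<rho> U V + ?\<rho> V W" for U V W
    using finite_S assms(1) by (rule weighted_sym_diff_triangle)
  obtain F where F_ext: "\<And>i. i \<in> X \<Longrightarrow> F (separating i) = x i"
    and F_lip: "\<And>U V. F U - F V \<le> ?\<rho> U V"
    using mcshane_extension[of X ?\<rho> x separating, OF finite_X _ triangle weighted_sym_diff_self lip]
      root_in by blast
  have "\<bar>F (upper \<sigma>) - F (upper \<sigma> - {\<sigma>})\<bar> \<le> \<alpha> \<sigma>" if "\<sigma> \<in> S" for \<sigma>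
  proof -
    have "\<sigma> \<in> upper \<sigma>" using that by (simp add: upper_def)
    then have "?\<rho> (upper \<sigma>) (upper \<sigma> - {\<sigma>}) = \<alpha> \<sigma>" "?\<rho> (upper \<sigma> - {\<sigma>}) (upper \<sigma>) = \<alpha> \<sigma>"
      using that weighted_sym_diff_remove weighted_sym_diff_commute by metis+
    then show ?thesis
      using F_lip[of "upper \<sigma>" "upper \<sigma> - {\<sigma>}"] F_lip[of "upper \<sigma> - {\<sigma>}" "upper \<sigma>"] by linarith
  qed
  moreover have "\<forall>i\<in>X. x i = F {} + (\<Sum>\<sigma>\<in>S. (F (upper \<sigma>) - F (upper \<sigma> - {\<sigma>})) * indic (side \<sigma>) i)"
    using F_ext by (simp add: sum_separating_telescope)
  ultimately show ?thesis by (intro that[of "\<lambda>\<sigma>. F (upper \<sigma>) - F (upper \<sigma> - {\<sigma>})"]) auto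
qed

lemma LIP_eq_zonotope:
  assumes "\<forall>\<sigma>\<in>S. 0 \<le> \<alpha> \<sigma>"
  shows "LIP X (d_alpha S \<alpha>) = zonotope S \<alpha> (\<lambda>\<sigma>. centred_indic X (side \<sigma>))"
proof
  show "LIP X (d_alpha S \<alpha>) \<subseteq> zonotope S \<alpha> (\<lambda>\<sigma>. centred_indic X (side \<sigma>))"
  proof
    fix x assume x: "x \<in> LIP X (d_alpha S \<alpha>)"
    obtain K s where s: "\<forall>\<sigma>\<in>S. \<bar>s \<sigma>\<bar> \<le> \<alpha> \<sigma>"
      and x_affine: "\<forall>i\<in>X. x i = K + (\<Sum>\<sigma>\<in>S. s \<sigma> * indic (side \<sigma>) i)"
      using LIP_affine_decomposition[OF assms x] .
    have "x = (\<lambda>i. \<Sum>\<sigma>\<in>S. s \<sigma> * centred_indic X (side \<sigma>) i)"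
      using finite_X finite_S x side(3) x_affine unfolding LIP_def
      by (intro centred_decomposition) auto
    then show "x \<in> zonotope S \<alpha> (\<lambda>\<sigma>. centred_indic X (side \<sigma>))"
      unfolding zonotope_def using s by blast
  qed
  show "zonotope S \<alpha> (\<lambda>\<sigma>. centred_indic X (side \<sigma>)) \<subseteq> LIP X (d_alpha S \<alpha>)"
    using finite_X splits side(1) by (intro zonotope_subset_LIP) auto
qed

end

theorem mainTheorem4:
  fixes X :: "'a set" and d :: "'a \<Rightarrow> 'a \<Rightarrow> real"
    and S :: "'a set set set" and \<alpha> :: "'a set set \<Rightarrow> real"
  assumes "finite X"
    and "\<forall>\<sigma>\<in>S. is_split X \<sigma>"
    and "compatible_system S"
    and "\<forall>\<sigma>\<in>S. \<alpha> \<sigma> > 0"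
    and "\<forall>i\<in>X. \<forall>j\<in>X. d i j = d_alpha S \<alpha> i j"
  shows "LIP X d = minkowski_sum S (\<lambda>\<sigma>. scale_set (\<alpha> \<sigma>) (split_seg X \<sigma>))"
proof (cases "X = {}")
  case True
  then have "S = {}" using assms(2) unfolding is_split_def by blast
  with True show ?thesis by (auto simp: LIP_def vecs_def minkowski_sum_def fun_eq_iff)
next
  case False
  then obtain r where "r \<in> X" by blast
  with assms interpret rooted_split_system X S r by unfold_locales
  have nonneg: "\<forall>\<sigma>\<in>S. 0 \<le> \<alpha> \<sigma>" using assms(4) by (simp add: less_imp_le)
  have "LIP X d = LIP X (d_alpha S \<alpha>)" using assms(5) unfolding LIP_def by auto
  also have "\<dots> = zonotope S \<alpha> (\<lambda>\<sigma>. centred_indic X (side \<sigma>))"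
    using nonneg by (rule LIP_eq_zonotope)
  also have "\<dots> = minkowski_sum S (\<lambda>\<sigma>. sym_segment (\<alpha> \<sigma>) (centred_indic X (side \<sigma>)))"
    by (rule minkowski_sum_sym_segments[symmetric])
  also have "\<dots> = minkowski_sum S (\<lambda>\<sigma>. scale_set (\<alpha> \<sigma>) (split_seg X \<sigma>))"
    using assms(1,2) side(1) nonneg
    by (intro minkowski_sum_cong scale_split_seg_eq_centred[symmetric]) auto
  finally show ?thesis .
qed

end
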